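(* (i) $\mathcal{SC}_\alpha\subset\mathcal{L}^{1/\beta}$ for all $0<\alpha<\beta\le1$. (ii) If $X\in\mathcal{SC}_\alpha$ for some $0<\alpha<1$ and $\lim_{x\to\infty}Q_X(x)/x^\alpha=0$, then $X^\alpha\in\mathcal{L}$.
   Context: For a nonnegative r.v. $X$, $Q_X(x)=-\log\mathbb{P}(X>x)$. $X\in\mathcal{SC}_\alpha$ ($0<\alpha<1$) if (i) $Q_X$ is eventually concave, (ii) $Q_X(x)/\log x\to\infty$, and (iii) there is $x_0>0$ such that $Q_X(x)/x^\alpha$ is nonincreasing on $[x_0,\infty)$. Class $\mathcal{L}$: nonnegative $Z$ with $\mathbb{P}(Z>x)>0$ for all $x$ and $\mathbb{P}(Z>x+y)/\mathbb{P}(Z>x)\to1$ for some (all) $y>0$; $X\in\mathcal{L}^p$ ($p\ge1$) means $X^{1/p}\in\mathcal{L}$. *)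

theory Defs
  imports "HOL-Probability.Probability"
begin

definition tail :: "'a measure \<Rightarrow> ('a \<Rightarrow> real) \<Rightarrow> real \<Rightarrow> real" where
  "tail M X x = measure M {\<omega> \<in> space M. X \<omega> > x}"

definition Qf :: "'a measure \<Rightarrow> ('a \<Rightarrow> real) \<Rightarrow> real \<Rightarrow> real" where
  "Qf M X x = - ln (tail M X x)"

text \<open>The class SC_alpha. Condition (i) "Q_X eventually concave" is read as: there is a
  point a from which on Q_X is finite (the tail is positive) and concave.\<close>
definition SC :: "real \<Rightarrow> 'a measure \<Rightarrow> ('a \<Rightarrow> real) \<Rightarrow> bool" where
  "SC \<alpha> M X \<longleftrightarrow>
     (\<exists>a. (\<forall>x\<ge>a. tail M X x > 0) \<and> concave_on {a..} (Qf M X)) \<and>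
     filterlim (\<lambda>x. Qf M X x / ln x) at_top at_top \<and>
     (\<exists>x0>0. antimono_on {x0..} (\<lambda>x. Qf M X x / x powr \<alpha>))"

definition in_L :: "'a measure \<Rightarrow> ('a \<Rightarrow> real) \<Rightarrow> bool" where
  "in_L M Z \<longleftrightarrow> (\<forall>x. tail M Z x > 0) \<and>
     (\<forall>y>0. ((\<lambda>x. tail M Z (x + y) / tail M Z x) \<longlongrightarrow> 1) at_top)"

definition in_Lp :: "real \<Rightarrow> 'a measure \<Rightarrow> ('a \<Rightarrow> real) \<Rightarrow> bool" where
  "in_Lp p M X \<longleftrightarrow> in_L M (\<lambda>\<omega>. X \<omega> powr (1 / p))"

end

theory Submission imports Defs begin

text \<open>Write \<open>Q = Q\<^sub>X\<close> and \<open>p = 1/\<gamma> \<ge> 1\<close>. For \<open>x \<ge> 0\<close>,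
  \<open>P(X\<^sup>\<gamma> > x + y) / P(X\<^sup>\<gamma> > x) = exp (Q (x\<^sup>p) - Q ((x + y)\<^sup>p))\<close>, so \<open>X\<^sup>\<gamma>\<close> is long-tailed once these
  increments of \<open>Q\<close> vanish. By concavity, the increment over \<open>[u, v] = [x\<^sup>p, (x + y)\<^sup>p]\<close> is at
  most \<open>v - u\<close> times the secant slope of \<open>Q\<close> from a fixed point to \<open>u\<close>, which is \<open>O(Q u / u)\<close>;
  by the mean value theorem \<open>v - u = O(x\<^sup>p\<^sup>-\<^sup>1)\<close>. Hence the increment is \<open>O(Q (x\<^sup>p) / x) = O(Q u / u\<^sup>\<gamma>)\<close>,
  which tends to \<open>0\<close> under the hypothesis of (ii). For (i), \<open>Q x / x\<^sup>\<alpha>\<close> is eventually bounded,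
  so \<open>Q x / x\<^sup>\<beta> \<rightarrow> 0\<close> and the same argument applies with \<open>\<gamma> = \<beta>\<close>.\<close>

lemma less_powr_iff_powr_inverse_less:
  fixes t x g :: real
  assumes "0 \<le> t" "0 \<le> x" "0 < g"
  shows "x < t powr g \<longleftrightarrow> x powr (1/g) < t"
proof -
  have "a powr (1/g) < b powr (1/g) \<longleftrightarrow> a < b" if "0 \<le> a" "0 \<le> b" for a b :: real
    using assms that by (meson divide_pos_pos not_less powr_less_mono2 powr_mono2 zero_less_one less_imp_le)
  then have "x < t powr g \<longleftrightarrow> x powr (1/g) < (t powr g) powr (1/g)"
    using assms by simp
  also have "(t powr g) powr (1/g) = t"
    using assms by (cases "t = 0") (simp_all add: powr_powr)
  finally show ?thesis .
qed

lemma concave_on_slope_antimono: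
  fixes Q :: "real \<Rightarrow> real"
  assumes "concave_on {a..} Q" "a < u" "u < v"
  shows "(Q v - Q u) / (v - u) \<le> (Q u - Q a) / (u - a)"
proof -
  have "convex_on {a..} (\<lambda>x. - Q x)"
    using assms(1) by (simp add: concave_on_def)
  from convex_on_slope_le[OF this, of a v u] assms
  have "(Q u - Q a) / (a - u) \<le> (Q v - Q u) / (u - v)"
    by (simp add: field_simps)
  then show ?thesis
    using assms by (simp add: field_simps)
qed

lemma concave_increment_le:
  fixes Q :: "real \<Rightarrow> real"
  assumes conc: "concave_on {a..} Q" and mono: "mono Q"
    and u: "0 < u" "2 * a \<le> u" and uv: "u < v"
  shows "Q v - Q u \<le> 2 * (v - u) * (Q u + \<bar>Q a\<bar>) / u"
proof -
  have "a < u" using u by linarith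
  have "Q a \<le> Q u" using mono \<open>a < u\<close> by (simp add: mono_def)
  have "Q v - Q u = (v - u) * ((Q v - Q u) / (v - u))"
    using uv by simp
  also have "\<dots> \<le> (v - u) * ((Q u - Q a) / (u - a))"
    using concave_on_slope_antimono[OF conc \<open>a < u\<close> uv] uv by (intro mult_left_mono) auto
  also have "\<dots> \<le> (v - u) * ((Q u + \<bar>Q a\<bar>) / (u / 2))"
    using \<open>Q a \<le> Q u\<close> u uv by (intro mult_left_mono frac_le) auto
  also have "\<dots> = 2 * (v - u) * (Q u + \<bar>Q a\<bar>) / u"
    by (simp add: algebra_simps)
  finally show ?thesis .
qed

lemma powr_add_diff_le:
  fixes p x y :: real
  assumes "1 \<le> p" "0 < x" "0 < y" "y \<le> x"
  shows "(x + y) powr p - x powr p \<le> p * 2 powr (p - 1) * y * x powr (p - 1)"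
proof -
  have "\<exists>z. x < z \<and> z < x + y \<and> (x + y) powr p - x powr p = (x + y - x) * (p * z powr (p - 1))"
    by (rule MVT2) (use assms in \<open>auto intro!: has_real_derivative_powr\<close>)
  then obtain z where z: "x < z" "z < x + y" "(x + y) powr p - x powr p = y * (p * z powr (p - 1))"
    by auto
  have "z powr (p - 1) \<le> (2 * x) powr (p - 1)"
    using z assms by (intro powr_mono2) auto
  then have "y * (p * z powr (p - 1)) \<le> y * (p * (2 powr (p - 1) * x powr (p - 1)))"
    using assms by (intro mult_left_mono) (auto simp: powr_mult)
  then show ?thesis
    using z by (simp add: algebra_simps)
qed

lemma concave_increment_powr_tendsto_0:
  fixes Q :: "real \<Rightarrow> real"
  assumes conc: "concave_on {a..} Q" and mono: "mono Q"
    and g: "0 < g" "g \<le> 1" and y: "0 < y"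
    and lim: "((\<lambda>u. Q u / u powr g) \<longlongrightarrow> 0) at_top"
  shows "((\<lambda>x. Q ((x + y) powr (1/g)) - Q (x powr (1/g))) \<longlongrightarrow> 0) at_top"
proof -
  define p where "p = 1/g"
  have p: "1 \<le> p" using g by (simp add: p_def)
  define K where "K = p * 2 powr (p - 1) * y"
  have powr_p_at_top: "filterlim (\<lambda>x::real. x powr p) at_top at_top"
    using p by (intro real_powr_at_top) simp
  have "((\<lambda>x. Q (x powr p) / (x powr p) powr g) \<longlongrightarrow> 0) at_top"
    using filterlim_compose[OF lim powr_p_at_top] .
  moreover have "\<forall>\<^sub>F x in at_top. Q (x powr p) / (x powr p) powr g = Q (x powr p) / x"
    using eventually_gt_at_top[of 0] by eventually_elim (use g in \<open>simp add: p_def powr_powr\<close>)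
  ultimately have "((\<lambda>x. Q (x powr p) / x) \<longlongrightarrow> 0) at_top"
    by (simp add: tendsto_cong)
  moreover have "((\<lambda>x. \<bar>Q a\<bar> / x) \<longlongrightarrow> 0) at_top"
    by (intro tendsto_divide_0[OF tendsto_const] filterlim_at_top_imp_at_infinity filterlim_ident)
  ultimately have "((\<lambda>x. 2 * K * (Q (x powr p) / x + \<bar>Q a\<bar> / x)) \<longlongrightarrow> 2 * K * (0 + 0)) at_top"
    by (intro tendsto_intros)
  then have bound_to_0: "((\<lambda>x. 2 * K * (Q (x powr p) / x + \<bar>Q a\<bar> / x)) \<longlongrightarrow> 0) at_top"
    by simp
  have "\<forall>\<^sub>F x in at_top. 0 \<le> Q ((x + y) powr p) - Q (x powr p)
      \<and> Q ((x + y) powr p) - Q (x powr p) \<le> 2 * K * (Q (x powr p) / x + \<bar>Q a\<bar> / x)"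
    using eventually_ge_at_top[of y] powr_p_at_top[unfolded filterlim_at_top, rule_format, of "2 * \<bar>a\<bar> + 1"]
  proof eventually_elim
    case (elim x)
    define u v where "u = x powr p" and "v = (x + y) powr p"
    have x: "0 < x" using elim y by linarith
    have u: "0 < u" "2 * a \<le> u" using elim x by (auto simp: u_def)
    have "u < v" using x y p by (simp add: u_def v_def powr_less_mono2)
    have "Q a \<le> Q u" using mono u by (simp add: mono_def)
    have "Q v - Q u \<le> 2 * (v - u) * (Q u + \<bar>Q a\<bar>) / u"
      by (rule concave_increment_le[OF conc mono u \<open>u < v\<close>])
    also have "\<dots> \<le> 2 * (K * x powr (p - 1)) * (Q u + \<bar>Q a\<bar>) / u"
      using powr_add_diff_le[OF p x y elim(1)] \<open>Q a \<le> Q u\<close> u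
      by (intro divide_right_mono mult_right_mono mult_left_mono) (auto simp: u_def v_def K_def)
    also have "\<dots> = 2 * K * (Q u / x + \<bar>Q a\<bar> / x)"
      using x by (simp add: u_def powr_diff field_simps)
    finally show ?case
      using mono \<open>u < v\<close> by (simp add: u_def v_def mono_def)
  qed
  then show ?thesis
    unfolding p_def[symmetric]
    by (intro tendsto_sandwich[OF _ _ tendsto_const bound_to_0]) (auto elim: eventually_mono)
qed

lemma antimono_div_powr_tendsto_0:
  fixes Q :: "real \<Rightarrow> real"
  assumes anti: "antimono_on {x0..} (\<lambda>x. Q x / x powr \<alpha>)" and "0 < x0"
    and Q_nonneg: "\<And>x. 0 \<le> Q x" and "\<alpha> < \<beta>"
  shows "((\<lambda>x. Q x / x powr \<beta>) \<longlongrightarrow> 0) at_top"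
proof -
  define C where "C = Q x0 / x0 powr \<alpha>"
  have "((\<lambda>x. C * x powr (\<alpha> - \<beta>)) \<longlongrightarrow> C * 0) at_top"
    using \<open>\<alpha> < \<beta>\<close> by (intro tendsto_intros tendsto_neg_powr filterlim_ident) auto
  then have upper_to_0: "((\<lambda>x. C * x powr (\<alpha> - \<beta>)) \<longlongrightarrow> 0) at_top"
    by simp
  have "\<forall>\<^sub>F x in at_top. 0 \<le> Q x / x powr \<beta> \<and> Q x / x powr \<beta> \<le> C * x powr (\<alpha> - \<beta>)"
    using eventually_ge_at_top[of x0]
  proof eventually_elim
    case (elim x)
    have "Q x / x powr \<alpha> \<le> C"
      using anti elim by (auto simp: C_def monotone_on_def)
    then have "Q x / x powr \<alpha> * x powr (\<alpha> - \<beta>) \<le> C * x powr (\<alpha> - \<beta>)"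
      by (rule mult_right_mono) simp
    then show ?case
      using elim \<open>0 < x0\<close> Q_nonneg[of x] by (simp add: powr_diff)
  qed
  then show ?thesis
    by (intro tendsto_sandwich[OF _ _ tendsto_const upper_to_0]) (auto elim: eventually_mono)
qed

context prob_space
begin

lemma tail_antimono:
  assumes "X \<in> borel_measurable M" "x \<le> x'"
  shows "tail M X x' \<le> tail M X x"
  unfolding tail_def using assms by (intro finite_measure_mono) auto

lemma tail_eq_exp_Qf:
  assumes "0 < tail M X x"
  shows "tail M X x = exp (- Qf M X x)"
  using assms by (simp add: Qf_def)

lemma Qf_nonneg:
  assumes "0 < tail M X x"
  shows "0 \<le> Qf M X x"
  using assms prob_le_1 by (simp add: Qf_def tail_def)

lemma SC_tail_pos:
  assumes "X \<in> borel_measurable M" "SC \<alpha> M X"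
  shows "0 < tail M X x"
proof -
  obtain a where "\<forall>x\<ge>a. 0 < tail M X x"
    using assms(2) by (auto simp: SC_def)
  then have "0 < tail M X (max a x)"
    by simp
  also have "\<dots> \<le> tail M X x"
    using assms(1) by (rule tail_antimono) simp
  finally show ?thesis .
qed

lemma SC_Qf_mono:
  assumes "X \<in> borel_measurable M" "SC \<alpha> M X"
  shows "mono (Qf M X)"
  using tail_antimono[OF assms(1)] SC_tail_pos[OF assms]
  by (intro monoI) (simp add: Qf_def)

lemma tail_powr:
  assumes "\<forall>\<omega>\<in>space M. 0 \<le> X \<omega>" "0 \<le> x" "0 < g"
  shows "tail M (\<lambda>\<omega>. X \<omega> powr g) x = tail M X (x powr (1/g))"
  unfolding tail_def using assms less_powr_iff_powr_inverse_less[of _ x g] by (metis (no_types))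

lemma tail_powr_neg:
  assumes "x < 0"
  shows "tail M (\<lambda>\<omega>. X \<omega> powr g) x = 1"
proof -
  have "{\<omega> \<in> space M. x < X \<omega> powr g} = space M"
    using assms by (auto intro: less_le_trans[OF _ powr_ge_zero])
  then show ?thesis
    by (simp add: tail_def prob_space)
qed

lemma in_L_powr_if_SC:
  assumes meas: "X \<in> borel_measurable M" and nonneg: "\<forall>\<omega>\<in>space M. 0 \<le> X \<omega>"
    and SC: "SC \<alpha> M X" and g: "0 < g" "g \<le> 1"
    and lim: "((\<lambda>x. Qf M X x / x powr g) \<longlongrightarrow> 0) at_top"
  shows "in_L M (\<lambda>\<omega>. X \<omega> powr g)"
proof -
  let ?T = "tail M (\<lambda>\<omega>. X \<omega> powr g)"
  obtain a where conc: "concave_on {a..} (Qf M X)"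
    using SC by (auto simp: SC_def)
  have pos: "0 < ?T x" for x
    using tail_powr[OF nonneg _ g(1)] tail_powr_neg SC_tail_pos[OF meas SC]
    by (cases "0 \<le> x") auto
  have "((\<lambda>x. ?T (x + y) / ?T x) \<longlongrightarrow> 1) at_top" if y: "0 < y" for y
  proof -
    define \<Delta> where "\<Delta> x = Qf M X ((x + y) powr (1/g)) - Qf M X (x powr (1/g))" for x
    have "(\<Delta> \<longlongrightarrow> 0) at_top"
      unfolding \<Delta>_def using concave_increment_powr_tendsto_0[OF conc SC_Qf_mono[OF meas SC] g y lim] .
    then have "((\<lambda>x. exp (- \<Delta> x)) \<longlongrightarrow> exp (- 0)) at_top"
      by (intro tendsto_intros)
    moreover have "\<forall>\<^sub>F x in at_top. ?T (x + y) / ?T x = exp (- \<Delta> x)"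
      using eventually_ge_at_top[of 0]
    proof eventually_elim
      case (elim x)
      then show ?case
        using y SC_tail_pos[OF meas SC]
        by (simp add: tail_powr[OF nonneg _ g(1)] tail_eq_exp_Qf[of X] \<Delta>_def exp_diff[symmetric])
    qed
    ultimately show ?thesis
      by (simp add: tendsto_cong)
  qed
  with pos show ?thesis
    unfolding in_L_def by blast
qed

end

theorem lemmaA6:
  fixes M :: "'a measure" and X :: "'a \<Rightarrow> real"
  assumes "prob_space M"
    and "X \<in> borel_measurable M"
    and "\<forall>\<omega>\<in>space M. 0 \<le> X \<omega>"
  shows "(\<forall>\<alpha> \<beta>. 0 < \<alpha> \<and> \<alpha> < \<beta> \<and> \<beta> \<le> 1 \<and> SC \<alpha> M X \<longrightarrow> in_Lp (1 / \<beta>) M X)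
       \<and> (\<forall>\<alpha>. 0 < \<alpha> \<and> \<alpha> < 1 \<and> SC \<alpha> M X
              \<and> ((\<lambda>x. Qf M X x / x powr \<alpha>) \<longlongrightarrow> 0) at_top
              \<longrightarrow> in_L M (\<lambda>\<omega>. X \<omega> powr \<alpha>))"
proof -
  interpret prob_space M by (rule assms(1))
  show ?thesis
  proof (intro conjI allI impI)
    fix \<alpha> \<beta> :: real
    assume h: "0 < \<alpha> \<and> \<alpha> < \<beta> \<and> \<beta> \<le> 1 \<and> SC \<alpha> M X"
    then obtain x0 where "0 < x0" "antimono_on {x0..} (\<lambda>x. Qf M X x / x powr \<alpha>)"
      by (auto simp: SC_def)
    then have "((\<lambda>x. Qf M X x / x powr \<beta>) \<longlongrightarrow> 0) at_top"
      using Qf_nonneg SC_tail_pos[OF assms(2)] h by (intro antimono_div_powr_tendsto_0) blast+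
    then have "in_L M (\<lambda>\<omega>. X \<omega> powr \<beta>)"
      using h by (intro in_L_powr_if_SC[OF assms(2,3)]) auto
    then show "in_Lp (1 / \<beta>) M X"
      by (simp add: in_Lp_def)
  next
    fix \<alpha> :: real
    assume "0 < \<alpha> \<and> \<alpha> < 1 \<and> SC \<alpha> M X \<and> ((\<lambda>x. Qf M X x / x powr \<alpha>) \<longlongrightarrow> 0) at_top"
    then show "in_L M (\<lambda>\<omega>. X \<omega> powr \<alpha>)"
      by (intro in_L_powr_if_SC[OF assms(2,3)]) auto
  qed
qed

end
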